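(* Let $k\ge1$ and $\ell\ge0$. Then $$\min\{n\in A_{2k}:\max\mathcal{CG}(n)=\max\mathcal{CG}_2(n)=F_{2k+2\ell}\}>\max\{n\in A_{2k}:\max\mathcal{CG}(n)=\max\mathcal{CG}_1(n)=F_{2k+2\ell}\}.$$
   Context: Fibonacci numbers: $F_1=F_2=1$, $F_{n+1}=F_n+F_{n-1}$ for $n\ge2$. Chung–Graham decomposition: every positive integer $n$ has a unique representation $n=\sum_{i\ge1}c_iF_{2i}$ with $c_i\in\{0,1,2\}$, only finitely many nonzero, such that whenever $c_i=c_j=2$ with $i<j$ there is $k$ with $i<k<j$ and $c_k=0$. Let $\mathcal{CG}(n)$ be the set of $F_{2i}$ with $c_i\neq0$, $\mathcal{CG}_1(n)$ the set of $F_{2i}$ with $c_i=1$, and $\mathcal{CG}_2(n)$ the set of $F_{2i}$ with $c_i=2$. For $k\ge1$, $A_{2k}=\{n\ge1:\min\mathcal{CG}(n)=F_{2k}\}$. *)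

theory Defs
  imports "HOL-Number_Theory.Fib"
begin

text \<open>Chung--Graham decomposition. Coefficients are a function c :: nat => nat,
  where c i is the coefficient of F_(2i) for i >= 1 (c 0 = 0 by convention).\<close>

definition is_CG :: "nat \<Rightarrow> (nat \<Rightarrow> nat) \<Rightarrow> bool" where
  "is_CG n c \<longleftrightarrow>
     c 0 = 0 \<and> (\<forall>i. c i \<le> 2) \<and> finite {i. c i \<noteq> 0} \<and>
     n = (\<Sum>i\<in>{i. c i \<noteq> 0}. c i * fib (2 * i)) \<and>
     (\<forall>i j. i < j \<and> c i = 2 \<and> c j = 2 \<longrightarrow> (\<exists>k. i < k \<and> k < j \<and> c k = 0))"

definition CG_coeff :: "nat \<Rightarrow> nat \<Rightarrow> nat" where
  "CG_coeff n = (THE c. is_CG n c)"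

definition CG :: "nat \<Rightarrow> nat set" where
  "CG n = {fib (2 * i) | i. i \<ge> 1 \<and> CG_coeff n i \<noteq> 0}"

definition CG1 :: "nat \<Rightarrow> nat set" where
  "CG1 n = {fib (2 * i) | i. i \<ge> 1 \<and> CG_coeff n i = 1}"

definition CG2 :: "nat \<Rightarrow> nat set" where
  "CG2 n = {fib (2 * i) | i. i \<ge> 1 \<and> CG_coeff n i = 2}"

definition A :: "nat \<Rightarrow> nat set" where
  "A k = {n. n \<ge> 1 \<and> Min (CG n) = fib (2 * k)}"

end

theory Submission
  imports Defs
begin

text \<open>Write K = k + l and F = F_(2K). If the largest summand of n is F, then n lies in
  [c_K F, (c_K + 1) F) where c_K is the top coefficient, because the part of an admissible
  coefficient string below position K always has value less than F. So the numbers with top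
  coefficient 1 are below 2F and those with top coefficient 2 are at least 2F; both sets are
  nonempty, witnessed by F_(2k) + c_K F, and finite. The bound below F is proved together with the sharper bound F_(2K-1)
  for strings in which every 2 is followed by a 0 before position K; the same two bounds drive the
  greedy construction that shows every number has a decomposition, which is needed because
  CG_coeff is defined by a definite description.\<close>

definition cg_admissible :: "(nat \<Rightarrow> nat) \<Rightarrow> bool" where
  "cg_admissible c \<longleftrightarrow> c 0 = 0 \<and> (\<forall>i. c i \<le> 2) \<and>
     (\<forall>i j. i < j \<and> c i = 2 \<and> c j = 2 \<longrightarrow> (\<exists>k. i < k \<and> k < j \<and> c k = 0))"

definition cg_val :: "(nat \<Rightarrow> nat) \<Rightarrow> nat \<Rightarrow> nat" where
  "cg_val c m = (\<Sum>i\<le>m. c i * fib (2 * i))"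

text \<open>Exactly the condition under which a coefficient 2 may be placed at position m + 1.\<close>
definition twos_closed :: "nat \<Rightarrow> (nat \<Rightarrow> nat) \<Rightarrow> bool" where
  "twos_closed m c \<longleftrightarrow> (\<forall>i\<le>m. c i = 2 \<longrightarrow> (\<exists>k. i < k \<and> k \<le> m \<and> c k = 0))"

lemma strict_mono_fib_even: "strict_mono (\<lambda>i. fib (2 * i))"
  unfolding strict_mono_Suc_iff by (simp add: fib_neq_0_nat)

lemma cg_val_upd_Suc: "cg_val (c(Suc m := x)) (Suc m) = cg_val c m + x * fib (2 * Suc m)"
proof -
  have "cg_val (c(Suc m := x)) m = cg_val c m"
    unfolding cg_val_def by (rule sum.cong) auto
  then show ?thesis by (simp add: cg_val_def)
qed

lemma cg_admissible_upd_0: "cg_admissible c \<Longrightarrow> cg_admissible (c(j := 0))"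
  unfolding cg_admissible_def by (metis fun_upd_apply zero_neq_numeral)

lemma cg_admissible_upd_Suc:
  assumes "cg_admissible c" and "\<forall>i>m. c i = 0"
  shows "cg_admissible (c(Suc m := x)) \<longleftrightarrow> x \<le> 2 \<and> (x = 2 \<longrightarrow> twos_closed m c)"
proof
  assume adm: "cg_admissible (c(Suc m := x))"
  have "twos_closed m c" if "x = 2"
    unfolding twos_closed_def
  proof (intro allI impI)
    fix i assume "i \<le> m" "c i = 2"
    then obtain k where "i < k" "k < Suc m" "(c(Suc m := x)) k = 0"
      using adm \<open>x = 2\<close> unfolding cg_admissible_def
      by (metis fun_upd_apply le_imp_less_Suc less_irrefl_nat)
    then show "\<exists>k. i < k \<and> k \<le> m \<and> c k = 0" by auto
  qed
  moreover have "x \<le> 2" using adm unfolding cg_admissible_def by (metis fun_upd_same)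
  ultimately show "x \<le> 2 \<and> (x = 2 \<longrightarrow> twos_closed m c)" by blast
next
  assume x: "x \<le> 2 \<and> (x = 2 \<longrightarrow> twos_closed m c)"
  have two_le: "j \<le> m" if "c j = 2" for j
    using assms(2) that by (metis not_le zero_neq_numeral)
  show "cg_admissible (c(Suc m := x))"
    unfolding cg_admissible_def
  proof (intro conjI allI impI)
    fix i j assume ij: "i < j \<and> (c(Suc m := x)) i = 2 \<and> (c(Suc m := x)) j = 2"
    show "\<exists>k. i < k \<and> k < j \<and> (c(Suc m := x)) k = 0"
    proof (cases "j = Suc m")
      case True
      with ij have "i \<le> m" "c i = 2" "x = 2" by auto
      with x obtain k where "i < k" "k \<le> m" "c k = 0"
        unfolding twos_closed_def by blast
      with True show ?thesis by (intro exI[of _ k]) auto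
    next
      case False
      with ij have "c j = 2" by simp
      then have "j \<le> m" by (rule two_le)
      with ij have "c i = 2" by (auto split: if_splits)
      with ij assms(1) \<open>c j = 2\<close> obtain k where "i < k" "k < j" "c k = 0"
        unfolding cg_admissible_def by blast
      with \<open>j \<le> m\<close> show ?thesis by (intro exI[of _ k]) auto
    qed
  qed (use assms(1) x in \<open>auto simp: cg_admissible_def\<close>)
qed

lemma twos_closed_upd_Suc:
  "twos_closed (Suc m) (c(Suc m := x)) \<longleftrightarrow> x = 0 \<or> (x \<noteq> 2 \<and> twos_closed m c)"
proof (cases "x = 0")
  case True
  then show ?thesis unfolding twos_closed_def
    by (metis fun_upd_same fun_upd_other le_neq_implies_less order_refl zero_neq_numeral)
next
  case False
  have "twos_closed (Suc m) (c(Suc m := x)) \<longleftrightarrow> x \<noteq> 2 \<and> twos_closed m c"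
    unfolding twos_closed_def
  proof (intro iffI conjI allI impI)
    assume cl: "\<forall>i\<le>Suc m. (c(Suc m := x)) i = 2 \<longrightarrow> (\<exists>k>i. k \<le> Suc m \<and> (c(Suc m := x)) k = 0)"
    then show "x \<noteq> 2" by auto
    fix i assume "i \<le> m" "c i = 2"
    with cl have "\<exists>k>i. k \<le> Suc m \<and> (c(Suc m := x)) k = 0" by simp
    then obtain k where "i < k" "k \<le> Suc m" "(c(Suc m := x)) k = 0" by blast
    with False show "\<exists>k>i. k \<le> m \<and> c k = 0" by (auto simp: le_Suc_eq split: if_splits)
  next
    fix i assume cl: "x \<noteq> 2 \<and> (\<forall>i\<le>m. c i = 2 \<longrightarrow> (\<exists>k>i. k \<le> m \<and> c k = 0))"
      and "i \<le> Suc m" "(c(Suc m := x)) i = 2"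
    then have "i \<le> m" "c i = 2" by (auto simp: le_Suc_eq split: if_splits)
    with cl obtain k where "i < k" "k \<le> m" "c k = 0" by auto
    then show "\<exists>k>i. k \<le> Suc m \<and> (c(Suc m := x)) k = 0" by (intro exI[of _ k]) auto
  qed
  with False show ?thesis by simp
qed

lemma cg_val_less_fib:
  assumes "cg_admissible c" and "\<forall>i>m. c i = 0"
  shows "cg_val c m < fib (2 * Suc m) \<and> (twos_closed m c \<longrightarrow> cg_val c m < fib (Suc (2 * m)))"
  using assms
proof (induction m arbitrary: c)
  case 0
  then show ?case by (simp add: cg_val_def cg_admissible_def)
next
  case (Suc m)
  define c' where "c' = c(Suc m := 0)"
  define x where "x = c (Suc m)"
  have c: "c = c'(Suc m := x)" by (simp add: c'_def x_def)
  have supp': "\<forall>i>m. c' i = 0" using Suc.prems(2) by (simp add: c'_def)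
  have adm': "cg_admissible c'" unfolding c'_def using Suc.prems(1) by (rule cg_admissible_upd_0)
  have IH: "cg_val c' m < fib (2 * Suc m)" "twos_closed m c' \<Longrightarrow> cg_val c' m < fib (Suc (2 * m))"
    using Suc.IH[OF adm' supp'] by auto
  have "cg_admissible (c'(Suc m := x))" using Suc.prems(1) by (simp only: c[symmetric])
  then have x: "x \<le> 2" "x = 2 \<Longrightarrow> twos_closed m c'"
    using cg_admissible_upd_Suc[OF adm' supp'] by auto
  have closed: "twos_closed (Suc m) c \<longleftrightarrow> x = 0 \<or> (x \<noteq> 2 \<and> twos_closed m c')"
    unfolding c by (rule twos_closed_upd_Suc)
  have val: "cg_val c (Suc m) = cg_val c' m + x * fib (2 * Suc m)"
    unfolding c by (rule cg_val_upd_Suc)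
  have fibs: "fib (2 * Suc (Suc m)) = fib (Suc (2 * m)) + 2 * fib (2 * Suc m)"
    "fib (Suc (2 * Suc m)) = fib (Suc (2 * m)) + fib (2 * Suc m)"
    by simp_all
  consider "x = 0" | "x = 1" | "x = 2" using x(1) by linarith
  then show ?case
  proof cases
    case 1
    then show ?thesis using IH(1) val fibs by simp
  next
    case 2
    then show ?thesis using IH val closed fibs by simp
  next
    case 3
    then show ?thesis using IH(2) x(2) val closed fibs by simp
  qed
qed

lemma cg_val_top_bounds:
  assumes "cg_admissible c" and "\<forall>i>Suc m. c i = 0"
  shows "c (Suc m) * fib (2 * Suc m) \<le> cg_val c (Suc m)"
    and "cg_val c (Suc m) < Suc (c (Suc m)) * fib (2 * Suc m)"
proof -
  define c' where "c' = c(Suc m := 0)"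
  have "cg_val c' m < fib (2 * Suc m)"
    using cg_val_less_fib[of c' m] cg_admissible_upd_0[OF assms(1)] assms(2) by (simp add: c'_def)
  moreover have "cg_val c (Suc m) = cg_val c' m + c (Suc m) * fib (2 * Suc m)"
    using cg_val_upd_Suc[of c' m "c (Suc m)"] by (simp add: c'_def)
  ultimately show "c (Suc m) * fib (2 * Suc m) \<le> cg_val c (Suc m)"
    and "cg_val c (Suc m) < Suc (c (Suc m)) * fib (2 * Suc m)" by simp_all
qed

lemma cg_top_coeff_eq_div:
  assumes "cg_admissible c" and "\<forall>i>Suc m. c i = 0"
  shows "c (Suc m) = cg_val c (Suc m) div fib (2 * Suc m)"
  using cg_val_top_bounds[OF assms] by (intro div_nat_eqI[symmetric]) (simp_all add: mult.commute)

lemma cg_admissible_unique: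
  assumes "cg_admissible c" "cg_admissible d" "\<forall>i>m. c i = 0" "\<forall>i>m. d i = 0"
    and "cg_val c m = cg_val d m"
  shows "c = d"
  using assms
proof (induction m arbitrary: c d)
  case 0
  then show ?case unfolding cg_admissible_def by (metis ext gr0I)
next
  case (Suc m)
  have top: "c (Suc m) = d (Suc m)"
    using cg_top_coeff_eq_div[of c m] cg_top_coeff_eq_div[of d m] Suc.prems by simp
  have val: "cg_val e (Suc m) = cg_val (e(Suc m := 0)) m + e (Suc m) * fib (2 * Suc m)" for e
    using cg_val_upd_Suc[of "e(Suc m := 0)" m "e (Suc m)"] by simp
  have "c(Suc m := 0) = d(Suc m := 0)"
  proof (rule Suc.IH)
    show "cg_admissible (c(Suc m := 0))" "cg_admissible (d(Suc m := 0))"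
      using Suc.prems(1,2) by (auto intro: cg_admissible_upd_0)
    show "\<forall>i>m. (c(Suc m := 0)) i = 0" "\<forall>i>m. (d(Suc m := 0)) i = 0"
      using Suc.prems(3,4) by auto
    show "cg_val (c(Suc m := 0)) m = cg_val (d(Suc m := 0)) m"
      using Suc.prems(5) top val[of c] val[of d] by simp
  qed
  then show ?case using top by (metis fun_upd_triv fun_upd_upd)
qed

lemma cg_admissible_exists:
  assumes "n < fib (2 * Suc m)"
  shows "\<exists>c. cg_admissible c \<and> (\<forall>i>m. c i = 0) \<and> cg_val c m = n \<and>
    (n < fib (Suc (2 * m)) \<longrightarrow> twos_closed m c)"
  using assms
proof (induction m arbitrary: n)
  case 0
  then show ?case
    by (intro exI[of _ "\<lambda>_. 0"]) (simp add: cg_admissible_def cg_val_def twos_closed_def)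
next
  case (Suc m)
  define F where "F = fib (2 * Suc m)"
  define x where "x = n div F"
  define r where "r = n mod F"
  have F_pos: "0 < F" by (simp add: F_def fib_neq_0_nat)
  have n: "n = x * F + r" by (simp add: x_def r_def)
  have "r < F" by (simp add: r_def F_pos)
  then obtain c where c: "cg_admissible c" "\<forall>i>m. c i = 0" "cg_val c m = r"
    "r < fib (Suc (2 * m)) \<longrightarrow> twos_closed m c"
    using Suc.IH F_def by blast
  have fibs: "fib (2 * Suc (Suc m)) = fib (Suc (2 * m)) + 2 * F"
    "fib (Suc (2 * Suc m)) = fib (Suc (2 * m)) + F"
    by (simp_all add: F_def)
  have "fib (Suc (2 * m)) \<le> F" unfolding F_def by (intro fib_mono) simp
  then have "n < 3 * F" using Suc.prems fibs(1) by linarith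
  then have "x \<le> 2" using less_mult_imp_div_less[of n 3 F] by (simp add: x_def)
  have "x = 2 \<Longrightarrow> r < fib (Suc (2 * m))" using Suc.prems fibs(1) n by simp
  then have adm: "cg_admissible (c(Suc m := x))"
    using cg_admissible_upd_Suc[OF c(1,2)] \<open>x \<le> 2\<close> c(4) by blast
  have "x = 0 \<or> (x = 1 \<and> r < fib (Suc (2 * m)))" if "n < fib (Suc (2 * Suc m))"
  proof -
    have "x * F + r < fib (Suc (2 * m)) + F" using that fibs(2) n by simp
    moreover consider "x = 0" | "x = 1" | "x = 2" using \<open>x \<le> 2\<close> by linarith
    then show ?thesis using calculation \<open>fib (Suc (2 * m)) \<le> F\<close> by cases simp_all
  qed
  then have closed: "n < fib (Suc (2 * Suc m)) \<longrightarrow> twos_closed (Suc m) (c(Suc m := x))"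
    using twos_closed_upd_Suc c(4) by auto
  have val: "cg_val (c(Suc m := x)) (Suc m) = n"
    using cg_val_upd_Suc c(3) n F_def by simp
  have supp: "\<forall>i>Suc m. (c(Suc m := x)) i = 0" using c(2) by simp
  from adm supp val closed show ?case by blast
qed

lemma is_CG_iff_cg_val:
  assumes "\<forall>i>m. c i = 0"
  shows "is_CG n c \<longleftrightarrow> cg_admissible c \<and> n = cg_val c m"
proof -
  have supp: "{i. c i \<noteq> 0} \<subseteq> {..m}" using assms by (auto simp: not_less[symmetric])
  then have "finite {i. c i \<noteq> 0}" by (rule finite_subset) simp
  moreover have "(\<Sum>i\<in>{i. c i \<noteq> 0}. c i * fib (2 * i)) = cg_val c m"
    unfolding cg_val_def by (rule sum.mono_neutral_left) (use supp in auto)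
  ultimately show ?thesis unfolding is_CG_def cg_admissible_def by auto
qed

lemma is_CG_bounded_support:
  assumes "is_CG n c"
  obtains m where "\<forall>i>m. c i = 0"
proof -
  have "finite {i. c i \<noteq> 0}" using assms by (simp add: is_CG_def)
  then obtain m where "\<forall>i\<in>{i. c i \<noteq> 0}. i < m" by (auto simp: finite_nat_set_iff_bounded)
  then have "\<forall>i>m. c i = 0" by auto
  then show thesis by (rule that)
qed

lemma ex1_is_CG: "\<exists>!c. is_CG n c"
proof (rule ex_ex1I)
  have "n < fib (2 * Suc n)"
    using strict_mono_imp_increasing[OF strict_mono_fib_even, of "Suc n"] by simp
  then obtain c where "cg_admissible c" "\<forall>i>n. c i = 0" "cg_val c n = n"
    using cg_admissible_exists by blast
  then have "is_CG n c" using is_CG_iff_cg_val[of n c n] by simp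
  then show "\<exists>c. is_CG n c" by blast
next
  fix c d assume "is_CG n c" "is_CG n d"
  obtain m1 where m1: "\<forall>i>m1. c i = 0" using \<open>is_CG n c\<close> by (rule is_CG_bounded_support)
  obtain m2 where m2: "\<forall>i>m2. d i = 0" using \<open>is_CG n d\<close> by (rule is_CG_bounded_support)
  have supp: "\<forall>i>max m1 m2. c i = 0" "\<forall>i>max m1 m2. d i = 0" using m1 m2 by auto
  show "c = d"
    using \<open>is_CG n c\<close> \<open>is_CG n d\<close> is_CG_iff_cg_val[OF supp(1)] is_CG_iff_cg_val[OF supp(2)]
    by (auto intro: cg_admissible_unique[OF _ _ supp])
qed

lemma is_CG_CG_coeff: "is_CG n (CG_coeff n)"
  unfolding CG_coeff_def by (rule theI'[OF ex1_is_CG])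

lemma CG_coeff_cg_val:
  assumes "cg_admissible c" and "\<forall>i>m. c i = 0"
  shows "CG_coeff (cg_val c m) = c"
proof -
  have "is_CG (cg_val c m) c" using is_CG_iff_cg_val[OF assms(2)] assms(1) by simp
  then show ?thesis using ex1_is_CG is_CG_CG_coeff by blast
qed

lemma fib_even_mem_iff: "fib (2 * K) \<in> {fib (2 * i) |i. P i} \<longleftrightarrow> P K"
  using strict_mono_eq[OF strict_mono_fib_even] by auto

lemma CG_eq_image: "CG n = (\<lambda>i. fib (2 * i)) ` {i. 1 \<le> i \<and> CG_coeff n i \<noteq> 0}"
  unfolding CG_def by auto

lemma finite_CG: "finite (CG n)"
proof -
  have "finite {i. CG_coeff n i \<noteq> 0}" using is_CG_CG_coeff[of n] by (simp add: is_CG_def)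
  then show ?thesis unfolding CG_eq_image by (auto intro: finite_subset)
qed

lemma CG1_subset_CG: "CG1 n \<subseteq> CG n"
  unfolding CG1_def CG_def by auto

lemma CG2_subset_CG: "CG2 n \<subseteq> CG n"
  unfolding CG2_def CG_def by auto

lemma Max_subset_CG:
  assumes "S \<subseteq> CG n" and "Max (CG n) \<in> S"
  shows "S \<noteq> {} \<and> Max S = Max (CG n)"
  using assms finite_CG Max_ge by (intro conjI Max_eqI) (auto intro: finite_subset)

lemma CG_coeff_eq_0_above_Max:
  assumes "Max (CG n) = fib (2 * K)" and "K < i"
  shows "CG_coeff n i = 0"
proof (rule ccontr)
  assume "CG_coeff n i \<noteq> 0"
  with \<open>K < i\<close> have "fib (2 * i) \<in> CG n" unfolding CG_def by auto
  then have "fib (2 * i) \<le> fib (2 * K)" using Max_ge[OF finite_CG] assms(1) by metis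
  with \<open>K < i\<close> show False using strict_mono_less[OF strict_mono_fib_even] by (metis not_le)
qed

lemma CG_coeff_Max_CG1:
  assumes "CG1 n \<noteq> {}" and "Max (CG1 n) = fib (2 * K)"
  shows "CG_coeff n K = 1"
proof -
  have "finite (CG1 n)" using CG1_subset_CG finite_CG by (rule finite_subset)
  then have "fib (2 * K) \<in> CG1 n" using Max_in assms by metis
  then show ?thesis unfolding CG1_def fib_even_mem_iff by simp
qed

lemma CG_coeff_Max_CG2:
  assumes "CG2 n \<noteq> {}" and "Max (CG2 n) = fib (2 * K)"
  shows "CG_coeff n K = 2"
proof -
  have "finite (CG2 n)" using CG2_subset_CG finite_CG by (rule finite_subset)
  then have "fib (2 * K) \<in> CG2 n" using Max_in assms by metis
  then show ?thesis unfolding CG2_def fib_even_mem_iff by simp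
qed

lemma CG_top_coeff_bounds:
  assumes "1 \<le> K" and "Max (CG n) = fib (2 * K)"
  shows "CG_coeff n K * fib (2 * K) \<le> n \<and> n < Suc (CG_coeff n K) * fib (2 * K)"
proof -
  obtain m where K: "K = Suc m" using assms(1) by (cases K) auto
  have supp: "\<forall>i>K. CG_coeff n i = 0" using CG_coeff_eq_0_above_Max[OF assms(2)] by blast
  then have "cg_admissible (CG_coeff n)" "n = cg_val (CG_coeff n) K"
    using is_CG_iff_cg_val[OF supp] is_CG_CG_coeff[of n] by simp_all
  then show ?thesis using cg_val_top_bounds[of "CG_coeff n" m] supp unfolding K by simp
qed

lemma exists_A_with_top_coeff:
  assumes "1 \<le> k" "k \<le> K" and "t \<in> {1, 2}"
  shows "\<exists>n\<in>A k. Max (CG n) = fib (2 * K) \<and> CG_coeff n K = t"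
proof -
  define c where "c i = (if i = K then t else if i = k then 1 else 0)" for i
  define n where "n = cg_val c K"
  have supp: "\<forall>i>K. c i = 0" using assms(2) by (simp add: c_def)
  have "cg_admissible c" using assms unfolding cg_admissible_def c_def by auto
  then have coeff: "CG_coeff n = c" unfolding n_def using supp by (rule CG_coeff_cg_val)
  have CG: "CG n = {fib (2 * k), fib (2 * K)}"
    using assms unfolding CG_eq_image coeff by (auto simp: c_def)
  have mono: "fib (2 * k) \<le> fib (2 * K)" using assms(2) by (intro fib_mono) simp
  have "c K * fib (2 * K) \<le> n" unfolding n_def cg_val_def by (rule member_le_sum) auto
  moreover have "0 < c K * fib (2 * K)" using assms by (auto simp: c_def fib_neq_0_nat)
  ultimately have "1 \<le> n" by linarith
  then have "n \<in> A k" unfolding A_def using CG mono by (simp add: min_def)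
  moreover have "Max (CG n) = fib (2 * K)" unfolding CG using mono by (simp add: max_def)
  moreover have "CG_coeff n K = t" unfolding coeff by (simp add: c_def)
  ultimately show ?thesis by blast
qed

theorem lemma3p5:
  fixes k l :: nat
  assumes "k \<ge> 1"
  shows "Min {n \<in> A k. CG2 n \<noteq> {} \<and> Max (CG n) = fib (2*k + 2*l) \<and> Max (CG2 n) = fib (2*k + 2*l)}
       > Max {n \<in> A k. CG1 n \<noteq> {} \<and> Max (CG n) = fib (2*k + 2*l) \<and> Max (CG1 n) = fib (2*k + 2*l)}"
proof -
  define K where "K = k + l"
  define F where "F = fib (2 * K)"
  define S1 where "S1 = {n \<in> A k. CG1 n \<noteq> {} \<and> Max (CG n) = F \<and> Max (CG1 n) = F}"
  define S2 where "S2 = {n \<in> A k. CG2 n \<noteq> {} \<and> Max (CG n) = F \<and> Max (CG2 n) = F}"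
  have K: "1 \<le> K" "k \<le> K" using assms by (simp_all add: K_def)
  have S1: "n < 2 * F" if "n \<in> S1" for n
    using that CG_coeff_Max_CG1 CG_top_coeff_bounds[OF K(1)] unfolding S1_def F_def by fastforce
  have S2: "2 * F \<le> n \<and> n < 3 * F" if "n \<in> S2" for n
    using that CG_coeff_Max_CG2 CG_top_coeff_bounds[OF K(1)] unfolding S2_def F_def by fastforce
  obtain n1 where n1: "n1 \<in> A k" "Max (CG n1) = F" "CG_coeff n1 K = 1"
    using exists_A_with_top_coeff[OF assms K(2)] F_def by blast
  then have "F \<in> CG1 n1" using K(1) by (auto simp: CG1_def F_def)
  then have "n1 \<in> S1" using n1 Max_subset_CG[OF CG1_subset_CG] unfolding S1_def by auto
  obtain n2 where n2: "n2 \<in> A k" "Max (CG n2) = F" "CG_coeff n2 K = 2"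
    using exists_A_with_top_coeff[OF assms K(2)] F_def by blast
  then have "F \<in> CG2 n2" using K(1) by (auto simp: CG2_def F_def)
  then have "n2 \<in> S2" using n2 Max_subset_CG[OF CG2_subset_CG] unfolding S2_def by auto
  have "finite S1" using S1 by (intro finite_subset[of S1 "{..<2 * F}"]) auto
  have "finite S2" using S2 by (intro finite_subset[of S2 "{..<3 * F}"]) auto
  have "Max S1 < 2 * F" using S1 Max_in \<open>finite S1\<close> \<open>n1 \<in> S1\<close> by blast
  also have "2 * F \<le> Min S2" using S2 Min_in \<open>finite S2\<close> \<open>n2 \<in> S2\<close> by blast
  finally show ?thesis
    unfolding S1_def S2_def F_def K_def by (simp add: algebra_simps)
qed

end
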